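(* Let $C$ be a subscription subtask with worst-case response time $R_C$ that is the only subscriber of a topic, and let its parents $A, B, \dots$ (the subtasks publishing to that topic) have worst-case response times $R_A, R_B, \dots$. Suppose the task set containing $A, B, C, \dots$ is strictly periodic, the parents' periods are harmonic, and the phase shift is sufficient in the following sense: for each pair of parents $A, B$, $$t_{RA} + R_A + R_C \leq t_{RB}, \qquad t_{RB} + R_B + R_C \leq t_{RA} + T_A,$$ where $t_{Rx}$ denotes a release time of $x$, these occurring at the time points $\phi_x + kT_x$, $k \in \mathbb{N}$, with $\phi_x$ the phase and $T_x$ the period of $x$. Then the message queue for that subscription's topic never contains more than one message.
   Context: Setting: a ROS~2 application on a single processor in which subtasks (callbacks) communicate via publish-subscribe topics. Each execution of a parent publishes one message to the topic, which is enqueued in the subscription's message queue and releases one job of the subscription $C$ immediately when the parent completes; that message is removed from the queue when the corresponding job of $C$ is executed. The response time of a job is the time from its release to its completion; $R_x$ is an upper bound on the response time of jobs of $x$. *)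

theory Defs
  imports Complex_Main
begin

definition release_time :: "('p \<Rightarrow> real) \<Rightarrow> ('p \<Rightarrow> real) \<Rightarrow> 'p \<Rightarrow> nat \<Rightarrow> real" where
  "release_time phi T x k = phi x + real k * T x"

definition harmonic_periods :: "'p set \<Rightarrow> ('p \<Rightarrow> real) \<Rightarrow> bool" where
  "harmonic_periods P T \<longleftrightarrow>
     (\<forall>x\<in>P. \<forall>y\<in>P. (\<exists>n::nat. T y = real n * T x) \<or> (\<exists>n::nat. T x = real n * T y))"

definition sufficient_phase_shift ::
  "'p set \<Rightarrow> ('p \<Rightarrow> real) \<Rightarrow> ('p \<Rightarrow> real) \<Rightarrow> ('p \<Rightarrow> real) \<Rightarrow> real \<Rightarrow> bool" where
  "sufficient_phase_shift P phi T R RC \<longleftrightarrow>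
     (\<forall>A\<in>P. \<forall>B\<in>P. A \<noteq> B \<longrightarrow>
        (\<exists>i j. release_time phi T A i + R A + RC \<le> release_time phi T B j \<and>
               release_time phi T B j + R B + RC \<le> release_time phi T A i + T A))"

text \<open>Messages are identified by (parent, job index). The message of job k of parent x is
enqueued at the completion time fin x k of that job and removed at time rm x k (when the
corresponding job of C is executed).\<close>
definition msg_queue ::
  "'p set \<Rightarrow> ('p \<Rightarrow> nat \<Rightarrow> real) \<Rightarrow> ('p \<Rightarrow> nat \<Rightarrow> real) \<Rightarrow> real \<Rightarrow> ('p \<times> nat) set" where
  "msg_queue P fin rm t = {(x, k). x \<in> P \<and> fin x k \<le> t \<and> t < rm x k}"

end

theory Submission
  imports Defs
begin

text \<open>A message of job k of parent x is queued only inside the response window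
[r, r + R_x + R_C) of that job, r its release time. The phase shift condition against any
second parent forces R_x + R_C \<le> T_x, so the windows of one parent are pairwise disjoint.
For parents x, y with T_y = n T_x, every release of y has the form t_RB + m T_x with m an
integer, and the phase shift condition puts each window of y into the gap between two
consecutive windows of x.\<close>

lemma int_eq_0_if_abs_mult_less:
  fixes T :: real and m :: int
  assumes "T > 0" "\<bar>of_int m * T\<bar> < T"
  shows "m = 0"
proof -
  have "\<bar>of_int m\<bar> * T < 1 * T"
    using assms by (simp add: abs_mult)
  then have "\<bar>m\<bar> < 1"
    using \<open>T > 0\<close> by (simp only: mult_less_cancel_right) simp
  then show ?thesis by simp
qed

lemma periodic_windows_unique:
  fixes T L a t :: real and p q :: int
  assumes "T > 0" "L \<le> T"
    and "a + of_int p * T \<le> t" "t < a + of_int p * T + L"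
    and "a + of_int q * T \<le> t" "t < a + of_int q * T + L"
  shows "p = q"
proof -
  have "\<bar>of_int (p - q) * T\<bar> < T"
    using assms by (simp add: left_diff_distrib abs_less_iff)
  then have "p - q = 0"
    by (rule int_eq_0_if_abs_mult_less[OF \<open>T > 0\<close>])
  then show ?thesis by simp
qed

lemma periodic_windows_disjoint:
  fixes T LA LB a b t :: real and p q :: int
  assumes "T > 0" "a + LA \<le> b" "b + LB \<le> a + T"
    and "a + of_int p * T \<le> t" "t < a + of_int p * T + LA"
    and "b + of_int q * T \<le> t" "t < b + of_int q * T + LB"
  shows False
proof -
  have "of_int (p - q) * T = of_int p * T - of_int q * T"
    by (simp add: left_diff_distrib)
  then have pos: "0 < of_int (p - q) * T" and "of_int (p - q) * T < T"
    using assms by linarith+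
  then have "p - q = 0"
    by (intro int_eq_0_if_abs_mult_less[OF \<open>T > 0\<close>]) simp
  with pos show False by simp
qed

lemma release_windows_same_job:
  assumes "T x > 0" "L \<le> T x"
    and "release_time phi T x k \<le> t" "t < release_time phi T x k + L"
    and "release_time phi T x l \<le> t" "t < release_time phi T x l + L"
  shows "k = l"
  using periodic_windows_unique[of "T x" L "phi x" "int k" t "int l"] assms
  unfolding release_time_def by simp

lemma phase_shift_window_le_period:
  assumes "sufficient_phase_shift P phi T R RC" "finite P" "card P \<ge> 2" "x \<in> P"
    and "\<And>z. z \<in> P \<Longrightarrow> R z \<ge> 0" "RC \<ge> 0"
  shows "R x + RC \<le> T x"
proof -
  have "\<not> (\<forall>a1\<in>P. \<forall>a2\<in>P. a1 = a2)"
    using assms(2,3) card_le_Suc0_iff_eq[of P] by simp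
  then obtain z where "z \<in> P" "z \<noteq> x" by blast
  with assms show ?thesis
    unfolding sufficient_phase_shift_def by fastforce
qed

lemma phase_shift_separates_windows:
  assumes "sufficient_phase_shift P phi T R RC"
    and "x \<in> P" "y \<in> P" "x \<noteq> y" "T x > 0" "T y = real n * T x"
    and "release_time phi T x k \<le> t" "t < release_time phi T x k + (R x + RC)"
    and "release_time phi T y l \<le> t" "t < release_time phi T y l + (R y + RC)"
  shows False
proof -
  obtain i j where
    ij: "release_time phi T x i + (R x + RC) \<le> release_time phi T y j"
        "release_time phi T y j + (R y + RC) \<le> release_time phi T x i + T x"
    using assms(1-4) unfolding sufficient_phase_shift_def by (metis add.assoc)
  have "release_time phi T x k = release_time phi T x i + of_int (int k - int i) * T x"
    "release_time phi T y l = release_time phi T y j + of_int ((int l - int j) * int n) * T x"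
    using \<open>T y = real n * T x\<close> unfolding release_time_def by (simp_all add: algebra_simps)
  then show False
    using periodic_windows_disjoint[OF \<open>T x > 0\<close> ij, of "int k - int i" t "(int l - int j) * int n"]
      assms(7-10) by simp
qed

lemma harmonic_phase_shift_separates_windows:
  assumes "sufficient_phase_shift P phi T R RC" "harmonic_periods P T" "\<forall>x\<in>P. T x > 0"
    and "x \<in> P" "y \<in> P" "x \<noteq> y"
    and window_x: "release_time phi T x k \<le> t" "t < release_time phi T x k + (R x + RC)"
    and window_y: "release_time phi T y l \<le> t" "t < release_time phi T y l + (R y + RC)"
  shows False
proof -
  consider n where "T y = real n * T x" | n where "T x = real n * T y"
    using assms(2,4,5) unfolding harmonic_periods_def by blast
  then show False
  proof cases
    case 1
    then show False
      using phase_shift_separates_windows[OF assms(1,4,5,6)] assms(3,4) window_x window_y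
      by blast
  next
    case 2
    then show False
      using phase_shift_separates_windows[OF assms(1,5,4) assms(6)[symmetric]] assms(3,5)
        window_x window_y by blast
  qed
qed

lemma msg_queue_within_response_window:
  assumes resp_parent: "\<forall>x\<in>P. \<forall>k. release_time phi T x k \<le> fin x k \<and>
                                   fin x k \<le> release_time phi T x k + R x"
    and resp_C: "\<forall>x\<in>P. \<forall>k. fin x k \<le> rm x k \<and> rm x k \<le> fin x k + RC"
    and queued: "(x, k) \<in> msg_queue P fin rm t"
  shows "x \<in> P" "release_time phi T x k \<le> t" "t < release_time phi T x k + (R x + RC)"
proof -
  from queued have "x \<in> P" and queued_at: "fin x k \<le> t" "t < rm x k"
    unfolding msg_queue_def by simp_all
  show "x \<in> P" by fact
  have "release_time phi T x k \<le> fin x k" "fin x k \<le> release_time phi T x k + R x"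
    "rm x k \<le> fin x k + RC"
    using resp_parent resp_C \<open>x \<in> P\<close> by simp_all
  with queued_at show "release_time phi T x k \<le> t" "t < release_time phi T x k + (R x + RC)"
    by linarith+
qed

theorem lemma7:
  fixes P :: "'p set"
    and phi T R :: "'p \<Rightarrow> real"
    and RC :: real
    and fin rm :: "'p \<Rightarrow> nat \<Rightarrow> real"
  assumes parents: "finite P" "card P \<ge> 2"
    and periods_pos: "\<forall>x\<in>P. T x > 0"
    and resp_parent: "\<forall>x\<in>P. \<forall>k. release_time phi T x k \<le> fin x k \<and>
                                   fin x k \<le> release_time phi T x k + R x"
    and resp_C: "\<forall>x\<in>P. \<forall>k. fin x k \<le> rm x k \<and> rm x k \<le> fin x k + RC"
    and harmonic: "harmonic_periods P T"
    and shift: "sufficient_phase_shift P phi T R RC"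
  shows "\<forall>t. \<forall>m1\<in>msg_queue P fin rm t. \<forall>m2\<in>msg_queue P fin rm t. m1 = m2"
proof (intro allI ballI)
  fix t and m1 m2 :: "'p \<times> nat"
  obtain x k y l where m: "m1 = (x, k)" "m2 = (y, l)" by (cases m1, cases m2)
  assume "m1 \<in> msg_queue P fin rm t" "m2 \<in> msg_queue P fin rm t"
  then have "x \<in> P" "y \<in> P"
    and window_x: "release_time phi T x k \<le> t" "t < release_time phi T x k + (R x + RC)"
    and window_y: "release_time phi T y l \<le> t" "t < release_time phi T y l + (R y + RC)"
    using msg_queue_within_response_window[OF resp_parent resp_C] m by blast+
  show "m1 = m2"
  proof (cases "x = y")
    case True
    have "R z \<ge> 0" if "z \<in> P" for z
      using resp_parent[rule_format, OF that, of 0] by linarith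
    moreover have "RC \<ge> 0"
      using resp_C[rule_format, OF \<open>x \<in> P\<close>, of 0] by linarith
    ultimately have "R x + RC \<le> T x"
      using phase_shift_window_le_period[OF shift parents \<open>x \<in> P\<close>] by simp
    then have "k = l"
      using release_windows_same_job[of T x] periods_pos \<open>x \<in> P\<close> window_x window_y
      unfolding True by blast
    then show ?thesis using m True by simp
  next
    case False
    then show ?thesis
      using harmonic_phase_shift_separates_windows[OF shift harmonic periods_pos]
        \<open>x \<in> P\<close> \<open>y \<in> P\<close> window_x window_y by blast
  qed
qed

end
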